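(* Let $\Sigma=\{0,1\}$ and $(p_{ij})_{i,j\in\Sigma}$ a transition matrix with $p_{ij}\in(0,1)$ for all $i,j$ and $p_{ij}\ne\tfrac12$ for some $(i,j)$. For a probability distribution $\mu$ on $\Sigma$ let $B_n^\mu$ be the number of bucket operations of radix sort on $n$ i.i.d. strings from the Markov source with initial distribution $\mu$ and transition matrix $(p_{ij})$. Then $$\mathbb E[B_n^\mu]=\frac1H n\log n+O(n)\qquad(n\to\infty),$$ where the $O(n)$ error term is uniform in the initial distribution $\mu$.
   Context: Markov source: each string $\xi_1\xi_2\ldots$ has $\mathbb P(\xi_1=j)=\mu_j$ and $\mathbb P(\xi_{k+1}=j\mid\xi_k=i)=p_{ij}$; strings are independent. $B_n^\mu=\sum_{j=1}^nD_j$ with $D_j$ the smallest $k\ge0$ such that no other string shares its first $k$ symbols (external path length of the trie). $\pi_0=p_{10}/(p_{01}+p_{10})$, $\pi_1=p_{01}/(p_{01}+p_{10})$, $H_i=-\sum_jp_{ij}\log p_{ij}$, $H=\pi_0H_0+\pi_1H_1$. *)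

theory Defs
  imports "HOL-Probability.Probability"
begin

text \<open>Alphabet \<Sigma> = {0,1} is encoded as bool: symbol 0 = False, symbol 1 = True.\<close>

definition is_distribution :: "(bool \<Rightarrow> real) \<Rightarrow> bool" where
  "is_distribution mu \<longleftrightarrow> (\<forall>a. 0 \<le> mu a) \<and> mu False + mu True = 1"

definition is_transition_matrix :: "(bool \<Rightarrow> bool \<Rightarrow> real) \<Rightarrow> bool" where
  "is_transition_matrix p \<longleftrightarrow> (\<forall>i j. 0 \<le> p i j) \<and> (\<forall>i. p i False + p i True = 1)"

fun chain_prob :: "(bool \<Rightarrow> bool \<Rightarrow> real) \<Rightarrow> bool \<Rightarrow> bool list \<Rightarrow> real" where
  "chain_prob p a [] = 1"
| "chain_prob p a (b # w) = p a b * chain_prob p b w"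

fun markov_prob :: "(bool \<Rightarrow> real) \<Rightarrow> (bool \<Rightarrow> bool \<Rightarrow> real) \<Rightarrow> bool list \<Rightarrow> real" where
  "markov_prob mu p [] = 1"
| "markov_prob mu p (a # w) = mu a * chain_prob p a w"

text \<open>n independent strings X 0, ..., X (n-1) on the probability space M, each
  distributed as the Markov source with initial distribution mu and transition matrix p
  (all finite-dimensional marginals are prescribed, which determines the law).\<close>
definition markov_strings ::
  "'a measure \<Rightarrow> (bool \<Rightarrow> real) \<Rightarrow> (bool \<Rightarrow> bool \<Rightarrow> real) \<Rightarrow> (nat \<Rightarrow> 'a \<Rightarrow> bool stream) \<Rightarrow> nat \<Rightarrow> bool" where
  "markov_strings M mu p X n \<longleftrightarrow>
     prob_space.indep_vars M (\<lambda>_. stream_space (count_space UNIV)) X {..<n} \<and>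
     (\<forall>j<n. \<forall>w. measure M {\<omega> \<in> space M. stake (length w) (X j \<omega>) = w} = markov_prob mu p w)"

definition depth :: "nat \<Rightarrow> (nat \<Rightarrow> bool stream) \<Rightarrow> nat \<Rightarrow> nat" where
  "depth n s j = (LEAST k. \<forall>i<n. i \<noteq> j \<longrightarrow> stake k (s i) \<noteq> stake k (s j))"

text \<open>B_n = D_1 + ... + D_n (external path length of the trie = bucket operations of radix sort).\<close>
definition ext_path_length :: "nat \<Rightarrow> (nat \<Rightarrow> bool stream) \<Rightarrow> nat" where
  "ext_path_length n s = (\<Sum>j<n. depth n s j)"

definition stat_pi :: "(bool \<Rightarrow> bool \<Rightarrow> real) \<Rightarrow> bool \<Rightarrow> real" where
  "stat_pi p i = (if i then p False True else p True False) / (p False True + p True False)"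

definition row_entropy :: "(bool \<Rightarrow> bool \<Rightarrow> real) \<Rightarrow> bool \<Rightarrow> real" where
  "row_entropy p i = - (\<Sum>j\<in>UNIV. p i j * ln (p i j))"

definition entropy_rate :: "(bool \<Rightarrow> bool \<Rightarrow> real) \<Rightarrow> real" where
  "entropy_rate p = stat_pi p False * row_entropy p False + stat_pi p True * row_entropy p True"

end

theory Submission
  imports Defs
begin

text \<open>By symmetry E[B_n] = n E[D_1], and E[D_1] = sum_k P(D_1 > k) is
  1 + sum_k sum_{|w| = k+1} phi(P(w)), where phi(y) = y (1 - (1 - y)^(n-1)) is the probability
  that string 1 starts with w and some other string does too.  A sum over the words of length k+1
  is the k-th iterate of the transfer operator (T F)(y, b) = sum_c F(y p_bc, c) evaluated at
  (mu_a, a).  If h solves the Poisson equation of the chain for the row entropies, the potential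
  F(y, b) = y max(0, ln(n y) + h_b) / H satisfies F - T F = phi up to a defect of order
  y min(n y, 1/(n y)), which in turn is dominated by the drift of a Lyapunov function.  So the
  series telescopes to the level-0 value of F, which is ln n / H + O(1), plus O(1), with
  constants depending on p only.\<close>

section \<open>Sums over the words of the Markov source\<close>

definition transfer :: "(bool \<Rightarrow> bool \<Rightarrow> real) \<Rightarrow> (real \<Rightarrow> bool \<Rightarrow> real) \<Rightarrow> real \<Rightarrow> bool \<Rightarrow> real" where
  "transfer p F y b = (\<Sum>c\<in>UNIV. F (y * p b c) c)"

definition level :: "(bool \<Rightarrow> real) \<Rightarrow> (bool \<Rightarrow> bool \<Rightarrow> real) \<Rightarrow> nat \<Rightarrow> (real \<Rightarrow> bool \<Rightarrow> real) \<Rightarrow> real" where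
  "level mu p k F = (\<Sum>w | length w = Suc k. F (markov_prob mu p w) (last w))"

lemma sum_UNIV_bool: "(\<Sum>c\<in>(UNIV::bool set). f c) = f False + f True"
  by (simp add: UNIV_bool)

lemma finite_words: "finite {w::bool list. length w = k}"
  using finite_lists_length_eq[of "UNIV::bool set" k] by simp

lemma sum_words_Suc_snoc:
  "(\<Sum>w | length w = Suc k. g w) = (\<Sum>v | length v = k. \<Sum>c\<in>UNIV. g (v @ [c :: bool]))"
proof -
  have words: "{w. length w = Suc k} = (\<lambda>(v, c). v @ [c]) ` ({v. length v = k} \<times> UNIV)"
    by (auto simp: length_Suc_conv_rev)
  have "inj_on (\<lambda>(v, c). v @ [c :: bool]) ({v. length v = k} \<times> UNIV)"
    by (auto simp: inj_on_def)
  then have "(\<Sum>w | length w = Suc k. g w) = (\<Sum>(v, c)\<in>{v. length v = k} \<times> UNIV. g (v @ [c]))"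
    unfolding words by (subst sum.reindex) (auto simp: case_prod_unfold)
  then show ?thesis
    by (simp add: sum.cartesian_product)
qed

lemma chain_prob_snoc: "chain_prob p a (w @ [c]) = chain_prob p a w * p (last (a # w)) c"
  by (induction w arbitrary: a) auto

lemma markov_prob_snoc:
  "w \<noteq> [] \<Longrightarrow> markov_prob mu p (w @ [c]) = markov_prob mu p w * p (last w) c"
  by (cases w) (auto simp: chain_prob_snoc)

lemma level_Suc: "level mu p (Suc k) F = level mu p k (transfer p F)"
proof -
  have "v \<noteq> []" if "length v = Suc k" for v :: "bool list"
    using that by auto
  then show ?thesis
    unfolding level_def transfer_def sum_words_Suc_snoc[of _ "Suc k"]
    by (intro sum.cong) (auto simp: markov_prob_snoc)
qed

lemma level_0: "level mu p 0 F = F (mu False) False + F (mu True) True"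
proof -
  have "{w::bool list. length w = Suc 0} = {[False], [True]}"
    by (auto simp: length_Suc_conv)
  then show ?thesis
    by (simp add: level_def)
qed

lemma level_add: "level mu p k (\<lambda>y b. F y b + G y b) = level mu p k F + level mu p k G"
  unfolding level_def by (rule sum.distrib)

lemma level_diff: "level mu p k (\<lambda>y b. F y b - G y b) = level mu p k F - level mu p k G"
  unfolding level_def by (rule sum_subtractf)

lemma level_scale: "level mu p k (\<lambda>y b. c * F y b) = c * level mu p k F"
  unfolding level_def by (rule sum_distrib_left[symmetric])

lemma distribution_le_1:
  assumes "is_distribution mu" shows "mu a \<le> 1"
proof -
  have "0 \<le> mu False" "0 \<le> mu True" "mu False + mu True = 1"
    using assms by (auto simp: is_distribution_def)
  then show ?thesis by (cases a) auto
qed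

lemma transition_le_1:
  assumes "is_transition_matrix p" shows "p i j \<le> 1"
proof -
  have "0 \<le> p i False" "0 \<le> p i True" "p i False + p i True = 1"
    using assms by (auto simp: is_transition_matrix_def)
  then show ?thesis by (cases j) auto
qed

lemma chain_prob_bounds:
  assumes "is_transition_matrix p" and "\<And>i j. p i j \<le> q"
  shows "0 \<le> chain_prob p a w \<and> chain_prob p a w \<le> q ^ length w"
proof (induction w arbitrary: a)
  case (Cons b w)
  have "0 \<le> p a b" using assms(1) unfolding is_transition_matrix_def by blast
  with Cons[of b] assms(2)[of a b] show ?case
    by (auto intro: mult_mono)
qed simp

lemma markov_prob_bounds:
  assumes "is_distribution mu" "is_transition_matrix p" and "\<And>i j. p i j \<le> q" and "w \<noteq> []"
  shows "0 \<le> markov_prob mu p w \<and> markov_prob mu p w \<le> q ^ (length w - 1)"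
proof -
  obtain a v where w: "w = a # v" using \<open>w \<noteq> []\<close> by (cases w) auto
  have "0 \<le> mu a" "mu a \<le> 1"
    using assms(1) distribution_le_1 unfolding is_distribution_def by auto
  with chain_prob_bounds[OF assms(2,3), of a v] show ?thesis
    using mult_left_le_one_le[of "chain_prob p a v" "mu a"] unfolding w by auto
qed

lemma level_mono:
  assumes "is_distribution mu" "is_transition_matrix p"
    and "\<And>y b. 0 \<le> y \<Longrightarrow> y \<le> 1 \<Longrightarrow> F y b \<le> G y b"
  shows "level mu p k F \<le> level mu p k G"
  unfolding level_def
proof (rule sum_mono)
  fix w :: "bool list" assume "w \<in> {w. length w = Suc k}"
  then show "F (markov_prob mu p w) (last w) \<le> G (markov_prob mu p w) (last w)"
    using markov_prob_bounds[OF assms(1,2) transition_le_1[OF assms(2)], of w] assms(3)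
    by (cases w) auto
qed

lemma level_vanishes:
  assumes "is_distribution mu" "is_transition_matrix p" and "\<And>i j. p i j \<le> q"
    and "\<And>y b. 0 \<le> y \<Longrightarrow> y \<le> q ^ k \<Longrightarrow> F y b = 0"
  shows "level mu p k F = 0"
  unfolding level_def
proof (rule sum.neutral, intro ballI)
  fix w :: "bool list" assume "w \<in> {w. length w = Suc k}"
  then show "F (markov_prob mu p w) (last w) = 0"
    using markov_prob_bounds[OF assms(1-3), of w] assms(4) by (cases w) auto
qed

lemma transfer_mass: "is_transition_matrix p \<Longrightarrow> transfer p (\<lambda>y b. y) = (\<lambda>y b. y)"
  unfolding transfer_def is_transition_matrix_def
  by (simp add: sum_UNIV_bool distrib_left[symmetric])

lemma level_mass:
  assumes "is_distribution mu" "is_transition_matrix p"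
  shows "level mu p k (\<lambda>y b. y) = 1"
proof (induction k)
  case 0 then show ?case using assms(1) by (simp add: level_0 is_distribution_def)
next
  case (Suc k) then show ?case by (simp add: level_Suc transfer_mass[OF assms(2)])
qed

lemma sum_markov_prob_words:
  assumes "is_distribution mu" "is_transition_matrix p"
  shows "(\<Sum>w | length w = k. markov_prob mu p w) = 1"
proof (cases k)
  case (Suc k')
  then show ?thesis using level_mass[OF assms, of k'] by (simp add: level_def)
qed simp

lemma level_abs_le:
  assumes "is_distribution mu" "is_transition_matrix p"
    and "\<And>y b. 0 \<le> y \<Longrightarrow> y \<le> 1 \<Longrightarrow> \<bar>F y b\<bar> \<le> G y b"
  shows "\<bar>level mu p k F\<bar> \<le> level mu p k G"
proof -
  have "\<bar>level mu p k F\<bar> \<le> level mu p k (\<lambda>y b. \<bar>F y b\<bar>)"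
    unfolding level_def by (rule sum_abs)
  also have "\<dots> \<le> level mu p k G" using assms by (intro level_mono)
  finally show ?thesis .
qed

lemma min_inverse_small: "0 < (t::real) \<Longrightarrow> t \<le> 1 \<Longrightarrow> min t (1/t) = t"
  by (simp add: min_def field_simps mult_le_one)

lemma min_inverse_large: "1 \<le> (t::real) \<Longrightarrow> min t (1/t) = 1/t"
  by (simp add: min_absorb2 order_trans[of "1/t" 1 t])

lemma min_inverse_ge_exp:
  assumes "0 < (t::real)" "\<bar>ln t\<bar> \<le> K" shows "exp (- K) \<le> min t (1/t)"
proof -
  have "exp (- K) \<le> exp (ln t)" "exp (- K) \<le> exp (- ln t)" using assms(2) by auto
  then show ?thesis using assms(1) by (simp add: exp_minus inverse_eq_divide)
qed

definition share_prob :: "nat \<Rightarrow> real \<Rightarrow> real" where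
  "share_prob n y = y * (1 - (1 - y) ^ (n - 1))"

lemma share_prob_bounds:
  assumes "0 \<le> y" "y \<le> 1" shows "0 \<le> share_prob n y \<and> share_prob n y \<le> y"
  using assms power_le_one[of "1 - y" "n - 1"] unfolding share_prob_def
  by (simp add: mult_left_le)

lemma share_prob_le_square:
  assumes "0 \<le> y" "y \<le> 1" shows "share_prob n y \<le> real (n - 1) * y * y"
proof -
  have "1 - (1 - y) ^ (n - 1) \<le> real (n - 1) * y"
    using Bernoulli_inequality[of "-y" "n - 1"] assms by simp
  then have "y * (1 - (1 - y) ^ (n - 1)) \<le> y * (real (n - 1) * y)"
    using assms by (intro mult_left_mono) auto
  then show ?thesis unfolding share_prob_def by (simp add: algebra_simps)
qed

lemma share_prob_complement:
  assumes "0 \<le> y" "y \<le> 1" "2 \<le> n" shows "(y - share_prob n y) * (real n * y) \<le> 2 * y"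
proof -
  let ?m = "n - 1"
  have "(1 - y) ^ ?m * (1 + ?m * y) \<le> (1 - y) ^ ?m * (1 + y) ^ ?m"
    using Bernoulli_inequality[of y ?m] assms by (intro mult_left_mono) auto
  also have "\<dots> = (1 - y * y) ^ ?m" by (simp add: power_mult_distrib[symmetric] algebra_simps)
  also have "\<dots> \<le> 1" using assms by (intro power_le_one) (auto simp: mult_le_one)
  finally have bernoulli: "(1 - y) ^ ?m * (1 + ?m * y) \<le> 1" .
  have "2 * y \<le> real n * y" using assms by (intro mult_right_mono) auto
  then have "real n * y \<le> 2 * (1 + ?m * y)" using assms by (simp add: of_nat_diff algebra_simps)
  then have "(1 - y) ^ ?m * (real n * y) \<le> (1 - y) ^ ?m * (2 * (1 + ?m * y))"
    using assms by (intro mult_left_mono) auto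
  also have "\<dots> = 2 * ((1 - y) ^ ?m * (1 + ?m * y))" by (rule mult.left_commute)
  also have "\<dots> \<le> 2" using bernoulli by simp
  finally have "(1 - y) ^ ?m * (real n * y) \<le> 2" .
  then show ?thesis
    using assms unfolding share_prob_def by (simp add: algebra_simps mult_left_mono[of _ _ y])
qed

definition neg_part :: "real \<Rightarrow> real" where
  "neg_part u = max 0 (-u)"

lemma neg_part_lipschitz: "\<bar>neg_part u - neg_part v\<bar> \<le> \<bar>u - v\<bar>"
  unfolding neg_part_def by (simp add: max_def abs_if)

lemma neg_part_eq_0: "0 \<le> u \<Longrightarrow> neg_part u = 0"
  unfolding neg_part_def by simp

lemma neg_part_eq_minus: "u \<le> 0 \<Longrightarrow> neg_part u = - u"
  unfolding neg_part_def by simp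

lemma max_0_eq_neg_part: "max 0 u = u + neg_part u"
  unfolding neg_part_def by (simp add: max_def)

lemma summable_telescoping_majorant:
  fixes d g :: "nat \<Rightarrow> real"
  assumes d: "\<And>k. \<bar>d k\<bar> \<le> C * (g k - g (Suc k))" and g: "\<And>k. 0 \<le> g k" and C: "0 \<le> C"
  shows "summable d" and "\<bar>suminf d\<bar> \<le> C * g 0"
proof -
  have partial: "(\<Sum>k<K. \<bar>d k\<bar>) \<le> C * g 0" for K
  proof -
    have "(\<Sum>k<K. \<bar>d k\<bar>) \<le> (\<Sum>k<K. C * (g k - g (Suc k)))" by (intro sum_mono d)
    also have "\<dots> = C * (g 0 - g K)" by (simp add: sum_lessThan_telescope' flip: sum_distrib_left)
    also have "\<dots> \<le> C * g 0" using g[of K] C by (simp add: mult_left_mono)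
    finally show ?thesis .
  qed
  have abs: "summable (\<lambda>k. \<bar>d k\<bar>)" by (rule summableI_nonneg_bounded[OF _ partial]) simp
  then show "summable d" by (rule summable_rabs_cancel)
  show "\<bar>suminf d\<bar> \<le> C * g 0"
    using summable_rabs[OF abs] suminf_le_const[OF abs partial] by linarith
qed

lemma sums_telescoping_eventually_zero:
  fixes a f d :: "nat \<Rightarrow> 'a :: real_normed_vector"
  assumes a: "\<And>k. a k = f k - f (Suc k) + d k"
    and f: "eventually (\<lambda>k. f k = 0) sequentially" and d: "summable d"
  shows "a sums (f 0 + suminf d)"
  unfolding sums_def
proof (rule Lim_transform_eventually)
  show "(\<lambda>K. f 0 + (\<Sum>k<K. d k)) \<longlonglongrightarrow> f 0 + suminf d"
    using summable_LIMSEQ[OF d] by (intro tendsto_add) auto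
  show "\<forall>\<^sub>F K in sequentially. f 0 + (\<Sum>k<K. d k) = (\<Sum>k<K. a k)"
    using f by eventually_elim (simp add: a sum.distrib sum_lessThan_telescope')
qed

lemma mass_log_bound:
  fixes N m h :: real
  assumes "1 \<le> N" "0 \<le> m" "m \<le> 1"
  shows "\<bar>m * max 0 (ln (N*m) + h) - m * ln N\<bar> \<le> 1 + \<bar>h\<bar>"
proof (cases "m = 0")
  case False
  with assms have m: "0 < m" by simp
  have split: "ln (N*m) = ln N + ln m" using assms m by (simp add: ln_mult)
  have "ln m \<le> 0" "0 \<le> ln N" using assms m by auto
  then have "max 0 (ln (N*m) + h) \<le> ln N + \<bar>h\<bar>"
    unfolding split using abs_ge_self[of h] by (intro max.boundedI) linarith+
  then have "m * max 0 (ln (N*m) + h) \<le> m * (ln N + \<bar>h\<bar>)"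
    using m by (intro mult_left_mono) auto
  moreover have "m * (ln N + ln m + h) \<le> m * max 0 (ln (N*m) + h)"
    using m unfolding split by (intro mult_left_mono) auto
  moreover have "m - 1 \<le> m * ln m"
    using ln_le_minus_one[of "1/m"] m by (simp add: ln_div field_simps)
  moreover have "\<bar>m * h\<bar> \<le> \<bar>h\<bar>" "m * \<bar>h\<bar> \<le> \<bar>h\<bar>"
    using assms by (simp_all add: abs_mult mult_left_le_one_le)
  ultimately show ?thesis using assms by (simp add: algebra_simps abs_le_iff)
qed simp

section \<open>Chains with positive transition probabilities\<close>

locale positive_chain =
  fixes p :: "bool \<Rightarrow> bool \<Rightarrow> real"
  assumes transition: "is_transition_matrix p"
    and positive: "\<forall>i j. 0 < p i j \<and> p i j < 1"
begin

abbreviation "H \<equiv> entropy_rate p"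

definition "pmin = min (min (p False False) (p False True)) (min (p True False) (p True True))"
definition "pmax = max (max (p False False) (p False True)) (max (p True False) (p True True))"

lemma p_pos: "0 < p i j" and p_less_1: "p i j < 1"
  using positive by auto

lemma pmin_pos: "0 < pmin" unfolding pmin_def using p_pos by simp
lemma pmax_less_1: "pmax < 1" unfolding pmax_def using p_less_1 by simp
lemma pmin_le: "pmin \<le> p i j" unfolding pmin_def by (cases i; cases j) auto
lemma pmax_ge: "p i j \<le> pmax" unfolding pmax_def by (cases i; cases j) auto
lemma pmax_nonneg: "0 \<le> pmax" using pmax_ge[of True True] p_pos[of True True] by linarith
lemma row_sum: "p i False + p i True = 1" using transition unfolding is_transition_matrix_def by auto

lemma row_entropy_eq: "row_entropy p b = - (p b False * ln (p b False) + p b True * ln (p b True))"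
  unfolding row_entropy_def by (simp add: sum_UNIV_bool)

lemma row_entropy_pos: "0 < row_entropy p b"
proof -
  have "p b c * ln (p b c) < 0" for c
    using p_pos p_less_1 by (simp add: mult_pos_neg)
  then show ?thesis unfolding row_entropy_eq by (smt (verit))
qed

lemma entropy_rate_balance:
  "H * (p False True + p True False) = p True False * row_entropy p False + p False True * row_entropy p True"
proof -
  have "0 < p False True + p True False" using p_pos by (simp add: add_pos_pos)
  moreover have "H = (p True False * row_entropy p False + p False True * row_entropy p True)
      / (p False True + p True False)"
    unfolding entropy_rate_def stat_pi_def by (simp add: add_divide_distrib)
  ultimately show ?thesis by simp
qed

lemma entropy_rate_pos: "0 < H"
  using p_pos row_entropy_pos unfolding entropy_rate_def stat_pi_def
  by (simp add: add_pos_pos)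

text \<open>The solution of the Poisson equation of the chain with reward \<open>row_entropy p\<close>,
  normalised by \<open>bias False = 0\<close>.\<close>
definition "bias b = (if b then (row_entropy p False - H) / p False True else 0)"

lemma poisson_equation: "row_entropy p b + bias b = H + (p b False * bias False + p b True * bias True)"
proof -
  have ne: "p False True \<noteq> 0" using p_pos by (metis less_irrefl)
  have row_True: "H * p True False + H * p True True = H"
    "row_entropy p False * p True False + row_entropy p False * p True True = row_entropy p False"
    using row_sum[of True] by (simp_all flip: distrib_left)
  have "row_entropy p True + bias True = H + (p True False * bias False + p True True * bias True)"
    using ne unfolding bias_def
    by (simp add: field_simps) (use row_True entropy_rate_balance in \<open>simp add: algebra_simps\<close>)
  moreover have "row_entropy p False + bias False = H + (p False False * bias False + p False True * bias True)"
    using ne unfolding bias_def by simp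
  ultimately show ?thesis by (cases b) simp_all
qed

text \<open>A Lyapunov function for the transfer operator: its drift is at least \<open>y min (N y) (1 / (N y))\<close>,
  which dominates the defect of the potential below, so the defect series is bounded by a
  telescoping sum.\<close>
definition "lyap_const = 2/pmin + 1/(1-pmax) + 1"
definition "lyap_profile t = (if t \<le> 1 then (lyap_const - 1) * t else lyap_const - 1/t)"
definition "lyap N y (b::bool) = y * lyap_profile (N * y)"

lemma lyap_const_ge: "1/(1-pmax) \<le> lyap_const - 1" "2/pmin \<le> lyap_const" "1 \<le> lyap_const"
  using pmax_less_1 pmin_pos unfolding lyap_const_def by auto

lemma lyap_profile_bounds:
  assumes "0 \<le> t" shows "0 \<le> lyap_profile t \<and> lyap_profile t \<le> lyap_const"
proof (cases "t \<le> 1")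
  case True
  then show ?thesis
    using assms lyap_const_ge(3) mult_left_le[of t "lyap_const - 1"] unfolding lyap_profile_def by simp
next
  case False
  then have "0 < 1/t" "1/t < 1" by auto
  then have "0 \<le> lyap_const - 1/t" "lyap_const - 1/t \<le> lyap_const" using lyap_const_ge(3) by linarith+
  then show ?thesis using False unfolding lyap_profile_def by simp
qed

lemma lyap_profile_le:
  assumes "pmin \<le> s" shows "lyap_profile s \<le> lyap_const - 1/s"
proof (cases "s \<le> 1")
  case True
  have s: "0 < s" using assms pmin_pos by linarith
  have "2 \<le> 2/pmin * s" using assms pmin_pos by (simp add: field_simps)
  moreover have "2/pmin * s \<le> lyap_const * s" using lyap_const_ge(2) s by (intro mult_right_mono) auto
  ultimately have "2 \<le> lyap_const * s" by linarith
  then have "0 \<le> (1 - s) * (lyap_const * s - 1 - s)" using True by simp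
  then have "(lyap_const - 1) * s \<le> lyap_const - 1/s" using s by (simp add: field_simps algebra_simps)
  then show ?thesis using True unfolding lyap_profile_def by simp
qed (simp add: lyap_profile_def)

lemma lyap_nonneg: "0 \<le> y \<Longrightarrow> 0 < N \<Longrightarrow> 0 \<le> lyap N y b"
  unfolding lyap_def using lyap_profile_bounds[of "N*y"] by simp

lemma lyap_le: "0 \<le> y \<Longrightarrow> 0 < N \<Longrightarrow> lyap N y b \<le> lyap_const * y"
  unfolding lyap_def using lyap_profile_bounds[of "N*y"] by (simp add: mult.commute mult_left_mono)

lemma transfer_lyap:
  "transfer p (lyap N) y b
     = y * p b False * lyap_profile (N * y * p b False) + y * p b True * lyap_profile (N * y * p b True)"
  unfolding transfer_def lyap_def by (simp add: sum_UNIV_bool algebra_simps)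

lemma lyap_drift:
  assumes N: "0 < N" and y: "0 < y"
  shows "y * min (N*y) (1/(N*y)) \<le> lyap N y b - transfer p (lyap N) y b"
proof -
  define t where "t = N * y"
  have t: "0 < t" unfolding t_def using N y by simp
  show ?thesis
  proof (cases "t \<le> 1")
    case True
    have "t * p b c \<le> 1" for c
      using True p_pos[of b c] p_less_1[of b c] t by (metis less_eq_real_def mult_le_one)
    then have "transfer p (lyap N) y b = y * (lyap_const - 1) * t * (p b False * p b False + p b True * p b True)"
      unfolding transfer_lyap lyap_profile_def t_def[symmetric] by (simp add: algebra_simps)
    also have "\<dots> \<le> y * (lyap_const - 1) * t * pmax"
    proof -
      have "p b False * p b False + p b True * p b True \<le> pmax * p b False + pmax * p b True"
        using pmax_ge[of b] p_pos[of b] by (intro add_mono mult_right_mono) (auto intro: less_imp_le)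
      then show ?thesis
        using y t lyap_const_ge row_sum[of b] by (intro mult_left_mono) (auto simp flip: distrib_left)
    qed
    finally have drift: "transfer p (lyap N) y b \<le> y * (lyap_const - 1) * t * pmax" .
    have "1 \<le> (lyap_const - 1) * (1 - pmax)"
      using lyap_const_ge(1) pmax_less_1 by (simp add: field_simps)
    moreover have "0 \<le> y * t" using y t by simp
    ultimately have "y * t \<le> y * t * ((lyap_const - 1) * (1 - pmax))"
      by (metis mult.right_neutral mult_left_mono)
    then show ?thesis
      using drift min_inverse_small[OF t True] True
      unfolding lyap_def lyap_profile_def t_def[symmetric] by (simp add: algebra_simps)
  next
    case False
    have c: "lyap_profile (t * p b c) \<le> lyap_const - 1 / (t * p b c)" for c
    proof (rule lyap_profile_le)
      have "pmin * 1 \<le> p b c * t" using pmin_le[of b c] False p_pos[of b c] pmin_pos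
        by (intro mult_mono) auto
      then show "pmin \<le> t * p b c" by (simp add: mult.commute)
    qed
    have "transfer p (lyap N) y b
        \<le> y * p b False * (lyap_const - 1 / (t * p b False)) + y * p b True * (lyap_const - 1 / (t * p b True))"
      unfolding transfer_lyap t_def[symmetric] using c y p_pos
      by (intro add_mono mult_left_mono) (auto intro: less_imp_le)
    also have "\<dots> = y * lyap_const * (p b False + p b True) - 2 * y / t"
      using p_pos[of b False] p_pos[of b True] t by (simp add: field_simps)
    finally have "transfer p (lyap N) y b \<le> y * lyap_const - 2 * (y / t)" using row_sum[of b] by simp
    moreover have "lyap N y b = y * lyap_const - y / t"
      unfolding lyap_def lyap_profile_def t_def[symmetric] using False by (simp add: algebra_simps)
    moreover have "y * min t (1/t) = y / t" using min_inverse_large[of t] False by simp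
    ultimately show ?thesis unfolding t_def by linarith
  qed
qed

text \<open>The potential \<open>potential N\<close> is the approximate solution of
  \<open>F - transfer p F = share_prob n\<close> (with \<open>N = n\<close>) whose level-0 sum is \<open>ln N / H\<close>.\<close>
definition "potential N y b = y * max 0 (ln (N*y) + bias b) / H"

definition "potential_error N y b =
  p b False * neg_part (ln (N*y) + ln (p b False) + bias False)
  + p b True * neg_part (ln (N*y) + ln (p b True) + bias True) - neg_part (ln (N*y) + bias b)"

definition "defect n y b = share_prob n y - (potential (real n) y b - transfer p (potential (real n)) y b)"

lemma poisson_shift:
  "p b False * (L + ln (p b False) + bias False) + p b True * (L + ln (p b True) + bias True) = L + bias b - H"
proof -
  have "p b False * (L + ln (p b False) + bias False) + p b True * (L + ln (p b True) + bias True)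
      = L * (p b False + p b True) + (p b False * ln (p b False) + p b True * ln (p b True))
        + (p b False * bias False + p b True * bias True)"
    by (simp add: algebra_simps)
  also have "\<dots> = L - row_entropy p b + (row_entropy p b + bias b - H)"
    using row_sum[of b] poisson_equation[of b] row_entropy_eq[of b] by simp
  finally show ?thesis by simp
qed

lemma potential_drift:
  assumes "0 < N" "0 < y"
  shows "potential N y b - transfer p (potential N) y b = y - y * potential_error N y b / H"
proof -
  define L where "L = ln (N*y)"
  define z where "z c = L + ln (p b c) + bias c" for c
  have "ln (N * (y * p b c)) = L + ln (p b c)" for c
    unfolding L_def using assms p_pos[of b c] by (simp add: ln_mult mult.assoc[symmetric])
  then have "transfer p (potential N) y b
      = y / H * (p b False * (z False + neg_part (z False)) + p b True * (z True + neg_part (z True)))"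
    unfolding transfer_def potential_def sum_UNIV_bool z_def max_0_eq_neg_part
    using entropy_rate_pos by (simp add: field_simps)
  also have "p b False * (z False + neg_part (z False)) + p b True * (z True + neg_part (z True))
      = (p b False * z False + p b True * z True) + (p b False * neg_part (z False) + p b True * neg_part (z True))"
    by (simp add: algebra_simps)
  also have "p b False * z False + p b True * z True = L + bias b - H"
    unfolding z_def by (rule poisson_shift)
  finally show ?thesis
    unfolding potential_def potential_error_def max_0_eq_neg_part z_def L_def
    using entropy_rate_pos by (simp add: field_simps)
qed

definition "error_bound = (\<Sum>b\<in>UNIV. \<Sum>c\<in>UNIV. \<bar>ln (p b c)\<bar> + \<bar>bias c\<bar> + \<bar>bias b\<bar>)"

lemma error_bound_ge: "\<bar>ln (p b c)\<bar> + \<bar>bias c\<bar> + \<bar>bias b\<bar> \<le> error_bound"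
  unfolding error_bound_def by (cases b; cases c) (auto simp: sum_UNIV_bool)

lemma error_bound_nonneg: "0 \<le> error_bound"
  using error_bound_ge[of False False] by linarith

lemma potential_error_abs: "\<bar>potential_error N y b\<bar> \<le> error_bound"
proof -
  define u where "u = ln (N*y) + bias b"
  define d where "d c = neg_part (ln (N*y) + ln (p b c) + bias c) - neg_part u" for c
  have d: "\<bar>d c\<bar> \<le> error_bound" for c
    using neg_part_lipschitz[of "ln (N*y) + ln (p b c) + bias c" u] error_bound_ge[of b c]
    unfolding d_def u_def by simp
  have "potential_error N y b = p b False * d False + p b True * d True"
    unfolding potential_error_def d_def u_def using row_sum[of b] by (simp add: algebra_simps flip: distrib_right)
  also have "\<bar>\<dots>\<bar> \<le> p b False * error_bound + p b True * error_bound"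
    using d by (intro order_trans[OF abs_triangle_ineq] add_mono)
      (simp_all add: abs_mult abs_of_pos[OF p_pos] mult_left_mono less_imp_le[OF p_pos])
  finally show ?thesis using row_sum[of b] by (simp flip: distrib_right)
qed

lemma potential_error_large:
  assumes "error_bound \<le> ln (N*y)" shows "potential_error N y b = 0"
proof -
  have "0 \<le> ln (N*y) + ln (p b c) + bias c" for c
    using error_bound_ge[of b c] assms by linarith
  moreover have "0 \<le> ln (N*y) + bias b"
    using error_bound_ge[of b b] assms by linarith
  ultimately show ?thesis
    unfolding potential_error_def by (simp add: neg_part_eq_0)
qed

lemma potential_error_small:
  assumes "ln (N*y) \<le> - error_bound" shows "potential_error N y b = H"
proof -
  define L where "L = ln (N*y)"
  have "ln (p b c) < 0" for c using p_pos p_less_1 by simp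
  then have neg_c: "neg_part (L + ln (p b c) + bias c) = - (L + ln (p b c) + bias c)" for c
    using error_bound_ge[of b c] assms unfolding L_def by (intro neg_part_eq_minus) linarith
  have neg_b: "neg_part (L + bias b) = - (L + bias b)"
    using error_bound_ge[of b b] assms unfolding L_def by (intro neg_part_eq_minus) linarith
  have "potential_error N y b
      = (L + bias b) - (p b False * (L + ln (p b False) + bias False) + p b True * (L + ln (p b True) + bias True))"
    unfolding potential_error_def L_def[symmetric] neg_c neg_b by (simp add: algebra_simps)
  then show ?thesis unfolding poisson_shift by simp
qed

lemma defect_eq:
  assumes "2 \<le> n" "0 < y"
  shows "defect n y b = share_prob n y - y + y * potential_error n y b / H"
  using potential_drift[of "real n" y b] assms unfolding defect_def by simp

lemma defect_large_mass:
  assumes n: "2 \<le> n" and y: "0 < y" "y \<le> 1" and large: "error_bound \<le> ln (real n * y)"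
  shows "\<bar>defect n y b\<bar> \<le> 2 * (y * min (real n * y) (1 / (real n * y)))"
proof -
  have "0 < real n * y" using n y by simp
  with large error_bound_nonneg have "1 \<le> real n * y" using ln_ge_zero_iff by fastforce
  define t where "t = real n * y"
  have "1 \<le> t" unfolding t_def by fact
  have "\<bar>defect n y b\<bar> = y - share_prob n y"
    using defect_eq[OF n y(1)] potential_error_large[OF large] share_prob_bounds[of y n] y by simp
  also have "\<dots> \<le> 2 * y / t"
    using share_prob_complement[OF less_imp_le[OF y(1)] y(2) n] n y
    unfolding t_def by (simp add: pos_le_divide_eq)
  also have "\<dots> = 2 * (y * min t (1/t))" using min_inverse_large[OF \<open>1 \<le> t\<close>] by simp
  finally show ?thesis unfolding t_def .
qed

lemma defect_small_mass:
  assumes n: "2 \<le> n" and y: "0 < y" "y \<le> 1" and small: "ln (real n * y) \<le> - error_bound"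
  shows "\<bar>defect n y b\<bar> \<le> y * min (real n * y) (1 / (real n * y))"
proof -
  have "0 < real n * y" using n y by simp
  with small error_bound_nonneg have "real n * y \<le> 1" using ln_le_zero_iff by fastforce
  define t where "t = real n * y"
  have t: "0 < t" "t \<le> 1" unfolding t_def using n y \<open>real n * y \<le> 1\<close> by auto
  have "\<bar>defect n y b\<bar> = share_prob n y"
    using defect_eq[OF n y(1)] potential_error_small[OF small] share_prob_bounds[of y n] y entropy_rate_pos
    by simp
  also have "\<dots> \<le> y * t"
  proof -
    have "real (n - 1) * y * y = y * t - y * y" unfolding t_def using n by (simp add: of_nat_diff algebra_simps)
    moreover have "0 \<le> y * y" by simp
    ultimately show ?thesis using share_prob_le_square[of y n] y by linarith
  qed
  also have "\<dots> = y * min t (1/t)" using min_inverse_small[OF t] by simp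
  finally show ?thesis unfolding t_def .
qed

lemma defect_moderate_mass:
  assumes n: "2 \<le> n" and y: "0 < y" "y \<le> 1" and moderate: "\<bar>ln (real n * y)\<bar> \<le> error_bound"
  shows "\<bar>defect n y b\<bar> \<le> (1 + error_bound/H) * exp error_bound * (y * min (real n * y) (1 / (real n * y)))"
proof -
  have "\<bar>defect n y b\<bar> \<le> \<bar>share_prob n y - y\<bar> + \<bar>y * potential_error n y b / H\<bar>"
    unfolding defect_eq[OF n y(1)] by (rule abs_triangle_ineq)
  also have "\<dots> \<le> y + y * error_bound / H"
    using share_prob_bounds[of y n] potential_error_abs[of n y b] y entropy_rate_pos
    by (intro add_mono) (auto simp: abs_mult divide_right_mono mult_left_mono)
  also have "\<dots> = (1 + error_bound/H) * exp error_bound * (y * exp (- error_bound))"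
    using mult_exp_exp[of error_bound "- error_bound"] by (simp add: algebra_simps add_divide_distrib)
  also have "\<dots> \<le> (1 + error_bound/H) * exp error_bound * (y * min (real n * y) (1 / (real n * y)))"
    using min_inverse_ge_exp[OF _ moderate] n y error_bound_nonneg entropy_rate_pos
    by (intro mult_left_mono) auto
  finally show ?thesis .
qed

definition "defect_const = 2 + (1 + error_bound/H) * exp error_bound"

lemma defect_bound:
  assumes n: "2 \<le> n" and y: "0 < y" "y \<le> 1"
  shows "\<bar>defect n y b\<bar> \<le> defect_const * (y * min (real n * y) (1 / (real n * y)))"
proof -
  let ?m = "y * min (real n * y) (1 / (real n * y))"
  have "0 \<le> ?m" using n y by simp
  then have scale: "c * ?m \<le> defect_const * ?m" if "c \<le> defect_const" for c
    using that by (rule mult_right_mono[rotated])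
  have "0 \<le> (1 + error_bound/H) * exp error_bound"
    using error_bound_nonneg entropy_rate_pos by simp
  then have const: "1 \<le> defect_const" "2 \<le> defect_const" "(1 + error_bound/H) * exp error_bound \<le> defect_const"
    unfolding defect_const_def by auto
  consider (large) "error_bound \<le> ln (real n * y)" | (small) "ln (real n * y) \<le> - error_bound"
    | (moderate) "\<bar>ln (real n * y)\<bar> \<le> error_bound" by linarith
  then show ?thesis
  proof cases
    case large
    show ?thesis by (rule order_trans[OF defect_large_mass[OF n y large] scale[OF const(2)]])
  next
    case small
    show ?thesis using order_trans[OF defect_small_mass[OF n y small] scale[OF const(1), simplified]] .
  next
    case moderate
    show ?thesis by (rule order_trans[OF defect_moderate_mass[OF n y moderate] scale[OF const(3)]])
  qed
qed

lemma defect_series: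
  assumes mu: "is_distribution mu" and n: "2 \<le> n"
  shows "summable (\<lambda>k. level mu p k (defect n))"
    and "\<bar>\<Sum>k. level mu p k (defect n)\<bar> \<le> defect_const * lyap_const"
proof -
  define Q where "Q = lyap (real n)"
  have N: "0 < real n" using n by simp
  have C: "0 \<le> defect_const"
    unfolding defect_const_def using error_bound_nonneg entropy_rate_pos by simp
  have "\<bar>defect n y b\<bar> \<le> defect_const * (Q y b - transfer p Q y b)" if "0 \<le> y" "y \<le> 1" for y b
  proof (cases "y = 0")
    case True
    then show ?thesis
      unfolding defect_def share_prob_def potential_def transfer_def Q_def lyap_def by simp
  next
    case False
    then have y: "0 < y" using that by simp
    have "\<bar>defect n y b\<bar> \<le> defect_const * (y * min (real n * y) (1 / (real n * y)))"
      using defect_bound[OF n y that(2)] .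
    also have "\<dots> \<le> defect_const * (Q y b - transfer p Q y b)"
      unfolding Q_def using lyap_drift[OF N y] C by (rule mult_left_mono)
    finally show ?thesis .
  qed
  then have "\<bar>level mu p k (defect n)\<bar> \<le> level mu p k (\<lambda>y b. defect_const * (Q y b - transfer p Q y b))" for k
    by (intro level_abs_le[OF mu transition])
  then have majorant: "\<bar>level mu p k (defect n)\<bar> \<le> defect_const * (level mu p k Q - level mu p (Suc k) Q)" for k
    by (simp add: level_scale level_diff level_Suc)
  have "level mu p k (\<lambda>y b. 0) \<le> level mu p k Q" for k
    unfolding Q_def using N by (intro level_mono[OF mu transition]) (simp add: lyap_nonneg)
  then have nonneg: "0 \<le> level mu p k Q" for k by (simp add: level_def)
  have "level mu p 0 Q \<le> level mu p 0 (\<lambda>y b. lyap_const * y)"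
    unfolding Q_def using N by (intro level_mono[OF mu transition]) (simp add: lyap_le)
  then have "level mu p 0 Q \<le> lyap_const" by (simp add: level_scale level_mass[OF mu transition])
  with C show "summable (\<lambda>k. level mu p k (defect n))"
    and "\<bar>\<Sum>k. level mu p k (defect n)\<bar> \<le> defect_const * lyap_const"
    using summable_telescoping_majorant[where d = "\<lambda>k. level mu p k (defect n)" and g = "\<lambda>k. level mu p k Q",
        OF majorant nonneg C]
    by (auto intro: order_trans mult_left_mono)
qed

lemma potential_level_0:
  assumes mu: "is_distribution mu" and N: "1 \<le> N"
  shows "\<bar>level mu p 0 (potential N) - ln N / H\<bar> \<le> (2 + \<bar>bias False\<bar> + \<bar>bias True\<bar>) / H"
proof -
  define e where "e a = mu a * max 0 (ln (N * mu a) + bias a) - mu a * ln N" for a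
  have lev: "level mu p 0 (potential N)
      = (mu False * max 0 (ln (N * mu False) + bias False) + mu True * max 0 (ln (N * mu True) + bias True)) / H"
    unfolding level_0 potential_def by (simp add: add_divide_distrib)
  have log: "ln N / H = (mu False * ln N + mu True * ln N) / H"
    using mu by (simp add: is_distribution_def flip: distrib_right)
  have e_bound: "\<bar>e a\<bar> \<le> 1 + \<bar>bias a\<bar>" for a
    unfolding e_def using mu distribution_le_1[OF mu] N
    by (intro mass_log_bound) (auto simp: is_distribution_def)
  have "level mu p 0 (potential N) - ln N / H = (e False + e True) / H"
    unfolding lev log e_def diff_divide_distrib[symmetric] by (simp add: algebra_simps)
  moreover have "\<bar>e False + e True\<bar> \<le> 2 + \<bar>bias False\<bar> + \<bar>bias True\<bar>"
    using abs_triangle_ineq[of "e False" "e True"] e_bound[of False] e_bound[of True] by linarith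
  ultimately show ?thesis using entropy_rate_pos by (simp add: divide_right_mono)
qed

lemma potential_level_eventually_0:
  assumes mu: "is_distribution mu" and N: "0 < N"
  shows "eventually (\<lambda>K. level mu p K (potential N) = 0) sequentially"
proof -
  define B where "B = \<bar>bias False\<bar> + \<bar>bias True\<bar>"
  have "(\<lambda>K. pmax ^ K) \<longlonglongrightarrow> 0" using pmax_nonneg pmax_less_1 by (intro LIMSEQ_power_zero) auto
  moreover have "0 < exp (- B) / N" using N by simp
  ultimately have "eventually (\<lambda>K. pmax ^ K < exp (- B) / N) sequentially"
    by (rule order_tendstoD(2))
  then show ?thesis
  proof eventually_elim
    case (elim K)
    have "potential N y b = 0" if "0 \<le> y" "y \<le> pmax ^ K" for y b
    proof (cases "y = 0")
      case False
      with that have y: "0 < y" by simp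
      have "N * y \<le> N * pmax ^ K" using that N by (intro mult_left_mono) auto
      also have "\<dots> < exp (- B)" using elim N by (simp add: pos_less_divide_eq mult.commute)
      finally have "N * y < exp (- B)" .
      then have "ln (N * y) < ln (exp (- B))" using N y by (subst ln_less_cancel_iff) auto
      then have "ln (N * y) < - B" by simp
      then have "ln (N * y) + bias b \<le> 0" unfolding B_def by (cases b) auto
      then show ?thesis unfolding potential_def by simp
    qed (simp add: potential_def)
    then show ?case by (rule level_vanishes[OF mu transition pmax_ge])
  qed
qed

definition "depth_const = 1 + (2 + \<bar>bias False\<bar> + \<bar>bias True\<bar>) / H + defect_const * lyap_const"

theorem share_series_bound:
  assumes mu: "is_distribution mu" and n: "2 \<le> n"
  shows "summable (\<lambda>k. level mu p k (\<lambda>y b. share_prob n y))"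
    and "\<bar>1 + (\<Sum>k. level mu p k (\<lambda>y b. share_prob n y)) - ln (real n) / H\<bar> \<le> depth_const"
proof -
  have "level mu p k (\<lambda>y b. share_prob n y)
      = level mu p k (potential n) - level mu p (Suc k) (potential n) + level mu p k (defect n)" for k
    unfolding level_Suc level_diff[symmetric] level_add[symmetric] defect_def by simp
  then have sums: "(\<lambda>k. level mu p k (\<lambda>y b. share_prob n y))
      sums (level mu p 0 (potential n) + (\<Sum>k. level mu p k (defect n)))"
    using n by (intro sums_telescoping_eventually_zero potential_level_eventually_0[OF mu]
        defect_series(1)[OF mu n]) auto
  then show "summable (\<lambda>k. level mu p k (\<lambda>y b. share_prob n y))" by (rule sums_summable)
  show "\<bar>1 + (\<Sum>k. level mu p k (\<lambda>y b. share_prob n y)) - ln (real n) / H\<bar> \<le> depth_const"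
    using sums_unique[OF sums] potential_level_0[OF mu, of n] defect_series(2)[OF mu n] n
    unfolding depth_const_def by auto
qed

end

section \<open>The expected depth of a string in the trie\<close>

lemma (in prob_space) expectation_nat_tail_sum:
  fixes f :: "'a \<Rightarrow> nat"
  assumes f: "f \<in> measurable M (count_space UNIV)"
    and summable: "summable (\<lambda>t. prob {x \<in> space M. t < f x})"
  shows "integrable M (\<lambda>x. real (f x))"
    and "expectation (\<lambda>x. real (f x)) = (\<Sum>t. prob {x \<in> space M. t < f x})"
proof -
  have [measurable]: "f \<in> measurable M (count_space UNIV)" by (fact f)
  have "(\<integral>\<^sup>+x. ennreal (real (f x)) \<partial>M) = (\<Sum>t. ennreal (prob {x \<in> space M. t < f x}))"
    using nn_integral_nat_function[OF f] by (simp add: emeasure_eq_measure ennreal_of_nat_eq_real_of_nat)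
  also have "\<dots> = ennreal (\<Sum>t. prob {x \<in> space M. t < f x})"
    using summable by (intro suminf_ennreal_eq) (auto simp: summable_sums)
  finally have "integrable M (\<lambda>x. real (f x))
      \<and> expectation (\<lambda>x. real (f x)) = (\<Sum>t. prob {x \<in> space M. t < f x})"
    by (subst nn_integral_eq_integrable[symmetric]) (auto intro: suminf_nonneg summable)
  then show "integrable M (\<lambda>x. real (f x))"
    and "expectation (\<lambda>x. real (f x)) = (\<Sum>t. prob {x \<in> space M. t < f x})" by auto
qed

locale markov_trie = prob_space M for M :: "'a measure" +
  fixes p :: "bool \<Rightarrow> bool \<Rightarrow> real" and mu :: "bool \<Rightarrow> real"
    and X :: "nat \<Rightarrow> 'a \<Rightarrow> bool stream" and n :: nat
  assumes transition: "is_transition_matrix p" and distribution: "is_distribution mu"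
    and strings: "markov_strings M mu p X n" and two_le_n: "2 \<le> n"
begin

abbreviation "stream_measure \<equiv> stream_space (count_space (UNIV :: bool set))"

lemma indep: "indep_vars (\<lambda>_. stream_measure) X {..<n}"
  using strings unfolding markov_strings_def by simp

lemma measurable_X [measurable]: "i < n \<Longrightarrow> X i \<in> measurable M stream_measure"
  using indep unfolding indep_vars_def by auto

lemma prob_prefix: "i < n \<Longrightarrow> prob {\<omega> \<in> space M. stake (length w) (X i \<omega>) = w} = markov_prob mu p w"
  using strings unfolding markov_strings_def by auto

lemma prefix_sets: "{s. stake k s = w} \<in> sets stream_measure"
proof -
  have "stake k -` {w} \<inter> space stream_measure \<in> sets stream_measure"
    by (rule measurable_sets[OF measurable_stake]) simp
  then show ?thesis by (simp add: space_stream_space vimage_def)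
qed

definition "shares j k = {\<omega> \<in> space M. \<exists>i<n. i \<noteq> j \<and> stake k (X i \<omega>) = stake k (X j \<omega>)}"

definition "alone j w = {\<omega> \<in> space M. stake (length w) (X j \<omega>) = w
    \<and> (\<forall>i<n. i \<noteq> j \<longrightarrow> stake (length w) (X i \<omega>) \<noteq> w)}"

lemma shares_sets: "j < n \<Longrightarrow> shares j k \<in> events"
proof -
  assume j: "j < n"
  have "shares j k = (\<Union>i\<in>{..<n} - {j}. {\<omega> \<in> space M. stake k (X i \<omega>) = stake k (X j \<omega>)})"
    unfolding shares_def by auto
  also have "\<dots> \<in> events" using j by (intro sets.finite_UN) auto
  finally show ?thesis .
qed

lemma shares_antimono: "k \<le> k' \<Longrightarrow> shares j k' \<subseteq> shares j k"
  unfolding shares_def by (auto simp: take_stake[symmetric] min_def) (metis take_stake min.absorb1)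

lemma alone_eq_INT:
  assumes "j < n"
  shows "alone j w = (\<Inter>i\<in>{..<n}. X i -` (if i = j then {s. stake (length w) s = w}
    else UNIV - {s. stake (length w) s = w}) \<inter> space M)"
  unfolding alone_def using assms by auto

lemma alone_sets: "j < n \<Longrightarrow> alone j w \<in> events"
  unfolding alone_eq_INT using prefix_sets sets.compl_sets[OF prefix_sets]
  by (intro sets.finite_INT measurable_sets[OF measurable_X]) (auto simp: space_stream_space)

lemma prob_alone:
  assumes j: "j < n"
  shows "prob (alone j w) = markov_prob mu p w * (1 - markov_prob mu p w) ^ (n - 1)"
proof -
  define k where "k = length w"
  define A where "A i = (if i = j then {s. stake k s = w} else UNIV - {s. stake k s = w})" for i
  have A: "A i \<in> sets stream_measure" for i
    unfolding A_def using prefix_sets sets.compl_sets[OF prefix_sets] by (auto simp: space_stream_space)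
  have prefix: "prob (X i -` {s. stake k s = w} \<inter> space M) = markov_prob mu p w" if "i < n" for i
  proof -
    have "X i -` {s. stake k s = w} \<inter> space M = {\<omega> \<in> space M. stake k (X i \<omega>) = w}" by auto
    then show ?thesis using prob_prefix[OF that] unfolding k_def by simp
  qed
  have "alone j w = (\<Inter>i\<in>{..<n}. X i -` A i \<inter> space M)"
    unfolding alone_eq_INT[OF j] A_def k_def ..
  also have "prob \<dots> = (\<Prod>i\<in>{..<n}. prob (X i -` A i \<inter> space M))"
    using j A by (intro indep_varsD[OF indep]) auto
  finally have "prob (alone j w) = (\<Prod>i\<in>{..<n}. prob (X i -` A i \<inter> space M))" .
  also have "\<dots> = prob (X j -` A j \<inter> space M) * (\<Prod>i\<in>{..<n} - {j}. prob (X i -` A i \<inter> space M))"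
    using j by (subst prod.remove[of _ j]) auto
  also have "\<dots> = markov_prob mu p w * (\<Prod>i\<in>{..<n} - {j}. 1 - markov_prob mu p w)"
  proof -
    have "prob (X i -` A i \<inter> space M) = 1 - markov_prob mu p w" if "i \<in> {..<n} - {j}" for i
    proof -
      have "X i -` A i \<inter> space M = space M - (X i -` {s. stake k s = w} \<inter> space M)"
        unfolding A_def using that by auto
      then show ?thesis
        using that prefix prob_compl[OF measurable_sets[OF measurable_X prefix_sets]] by simp
    qed
    moreover have "prob (X j -` A j \<inter> space M) = markov_prob mu p w"
      unfolding A_def using prefix[OF j] by simp
    ultimately show ?thesis by simp
  qed
  finally show ?thesis using j by (simp add: card_Diff_singleton)
qed

lemma prob_shares:
  assumes j: "j < n"
  shows "prob (shares j k) = (\<Sum>w | length w = k. share_prob n (markov_prob mu p w))"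
proof -
  have "space M - shares j k = (\<Union>w\<in>{w. length w = k}. alone j w)"
    unfolding shares_def alone_def by auto
  then have "prob (space M - shares j k) = (\<Sum>w | length w = k. prob (alone j w))"
    using alone_sets[OF j] finite_words
    by (auto intro!: finite_measure_finite_Union simp: disjoint_family_on_def alone_def)
  then have "1 - prob (shares j k) = (\<Sum>w | length w = k. prob (alone j w))"
    using prob_compl[OF shares_sets[OF j]] by simp
  also have "\<dots> = (\<Sum>w | length w = k. markov_prob mu p w * (1 - markov_prob mu p w) ^ (n - 1))"
    using prob_alone[OF j] by simp
  finally show ?thesis
    using sum_markov_prob_words[OF distribution transition, of k]
    unfolding share_prob_def by (simp add: algebra_simps sum_subtractf)
qed

lemma prob_shares_0: "j < n \<Longrightarrow> prob (shares j 0) = 1"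
proof -
  assume "j < n"
  moreover have "n - 1 = Suc (n - 2)" using two_le_n by arith
  ultimately show ?thesis by (simp add: prob_shares share_prob_def del: Suc_diff_le)
qed

lemma prob_shares_Suc: "j < n \<Longrightarrow> prob (shares j (Suc k)) = level mu p k (\<lambda>y b. share_prob n y)"
  by (simp add: prob_shares level_def)

lemma depth_gt_imp_shares:
  assumes "\<omega> \<in> space M" "t < depth n (\<lambda>i. X i \<omega>) j"
  shows "\<omega> \<in> shares j t"
proof -
  have "\<not> (\<forall>i<n. i \<noteq> j \<longrightarrow> stake t (X i \<omega>) \<noteq> stake t (X j \<omega>))"
    using assms(2) unfolding depth_def by (rule not_less_Least)
  then show ?thesis using assms(1) unfolding shares_def by blast
qed

lemma shares_imp_depth_gt:
  assumes "\<omega> \<in> shares j t" "\<omega> \<notin> shares j k"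
  shows "t < depth n (\<lambda>i. X i \<omega>) j"
proof (rule ccontr)
  let ?P = "\<lambda>k. \<forall>i<n. i \<noteq> j \<longrightarrow> stake k (X i \<omega>) \<noteq> stake k (X j \<omega>)"
  assume "\<not> t < depth n (\<lambda>i. X i \<omega>) j"
  then have le: "(LEAST k. ?P k) \<le> t" unfolding depth_def by simp
  have "\<omega> \<in> space M" using assms(1) unfolding shares_def by blast
  with assms(2) have "?P k" unfolding shares_def by blast
  then have "?P (LEAST k. ?P k)" by (rule LeastI)
  then have "\<omega> \<notin> shares j (LEAST k. ?P k)" unfolding shares_def by blast
  then show False using assms(1) shares_antimono[OF le] by blast
qed

lemma depth_measurable:
  assumes j: "j < n" shows "(\<lambda>\<omega>. depth n (\<lambda>i. X i \<omega>) j) \<in> measurable M (count_space UNIV)"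
  unfolding depth_def
proof (rule measurable_Least)
  fix k
  have "{\<omega> \<in> space M. \<forall>i<n. i \<noteq> j \<longrightarrow> stake k (X i \<omega>) \<noteq> stake k (X j \<omega>)} = space M - shares j k"
    unfolding shares_def by auto
  then show "Measurable.pred M (\<lambda>\<omega>. \<forall>i<n. i \<noteq> j \<longrightarrow> stake k (X i \<omega>) \<noteq> stake k (X j \<omega>))"
    unfolding pred_def using shares_sets[OF j] by auto
qed

lemma prob_depth_gt:
  assumes j: "j < n" and summable: "summable (\<lambda>k. prob (shares j k))"
  shows "prob {\<omega> \<in> space M. t < depth n (\<lambda>i. X i \<omega>) j} = prob (shares j t)"
proof -
  let ?D = "{\<omega> \<in> space M. t < depth n (\<lambda>i. X i \<omega>) j}"
  have "(\<lambda>\<omega>. depth n (\<lambda>i. X i \<omega>) j) -` {t<..} \<inter> space M \<in> events"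
    by (rule measurable_sets[OF depth_measurable[OF j]]) simp
  moreover have "(\<lambda>\<omega>. depth n (\<lambda>i. X i \<omega>) j) -` {t<..} \<inter> space M = ?D" by auto
  ultimately have D: "?D \<in> events" by simp
  have never: "(\<Inter>k. shares j k) \<in> events"
    using shares_sets[OF j] by (intro sets.countable_INT) auto
  have "prob (\<Inter>k. shares j k) \<le> prob (shares j k)" for k
    using shares_sets[OF j] by (intro finite_measure_mono) auto
  then have "prob (\<Inter>k. shares j k) \<le> 0"
    by (intro LIMSEQ_le_const[OF summable_LIMSEQ_zero[OF summable]]) auto
  moreover have "shares j t - ?D \<subseteq> (\<Inter>k. shares j k)"
  proof (intro subsetI INT_I)
    fix \<omega> k assume \<omega>: "\<omega> \<in> shares j t - ?D"
    then have "\<omega> \<in> space M" "\<not> t < depth n (\<lambda>i. X i \<omega>) j" unfolding shares_def by auto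
    with \<omega> show "\<omega> \<in> shares j k" using shares_imp_depth_gt[of \<omega> j t k] by blast
  qed
  then have "prob (shares j t - ?D) \<le> prob (\<Inter>k. shares j k)"
    using never by (rule finite_measure_mono)
  moreover have "?D \<subseteq> shares j t" using depth_gt_imp_shares by blast
  then have "prob (shares j t - ?D) = prob (shares j t) - prob ?D"
    using shares_sets[OF j] D by (rule finite_measure_Diff[rotated 2])
  ultimately show ?thesis using measure_nonneg[of M "shares j t - ?D"] by linarith
qed

lemma expected_depth:
  assumes j: "j < n" and summable: "summable (\<lambda>k. level mu p k (\<lambda>y b. share_prob n y))"
  shows "integrable M (\<lambda>\<omega>. real (depth n (\<lambda>i. X i \<omega>) j))"
    and "expectation (\<lambda>\<omega>. real (depth n (\<lambda>i. X i \<omega>) j)) = 1 + (\<Sum>k. level mu p k (\<lambda>y b. share_prob n y))"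
proof -
  have shares: "summable (\<lambda>k. prob (shares j k))"
    using summable prob_shares_Suc[OF j] by (subst summable_Suc_iff[symmetric]) simp
  have "(\<Sum>k. prob (shares j k)) = 1 + (\<Sum>k. level mu p k (\<lambda>y b. share_prob n y))"
    using suminf_split_head[OF shares] prob_shares_Suc[OF j] prob_shares_0[OF j] by simp
  then show "integrable M (\<lambda>\<omega>. real (depth n (\<lambda>i. X i \<omega>) j))"
    and "expectation (\<lambda>\<omega>. real (depth n (\<lambda>i. X i \<omega>) j)) = 1 + (\<Sum>k. level mu p k (\<lambda>y b. share_prob n y))"
    using expectation_nat_tail_sum[OF depth_measurable[OF j]] prob_depth_gt[OF j shares] shares by simp_all
qed

lemma expected_ext_path_length:
  assumes summable: "summable (\<lambda>k. level mu p k (\<lambda>y b. share_prob n y))"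
  shows "integrable M (\<lambda>\<omega>. real (ext_path_length n (\<lambda>j. X j \<omega>)))"
    and "expectation (\<lambda>\<omega>. real (ext_path_length n (\<lambda>j. X j \<omega>)))
      = real n * (1 + (\<Sum>k. level mu p k (\<lambda>y b. share_prob n y)))"
  using expected_depth[OF _ summable]
  unfolding ext_path_length_def of_nat_sum by (auto simp: Bochner_Integration.integral_sum)

end

theorem theorem5p1:
  fixes p :: "bool \<Rightarrow> bool \<Rightarrow> real"
  assumes "is_transition_matrix p"
    and "\<forall>i j. 0 < p i j \<and> p i j < 1"
    and "\<exists>i j. p i j \<noteq> 1/2"
  shows "\<exists>C N. \<forall>(M :: 'a measure) mu X n.
           prob_space M \<and> is_distribution mu \<and> markov_strings M mu p X n \<and> n \<ge> N \<longrightarrow>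
             integrable M (\<lambda>\<omega>. real (ext_path_length n (\<lambda>j. X j \<omega>))) \<and>
             \<bar>(\<integral>\<omega>. real (ext_path_length n (\<lambda>j. X j \<omega>)) \<partial>M)
                - real n * ln (real n) / entropy_rate p\<bar> \<le> C * real n"
proof -
  \<comment> \<open>The hypothesis that some \<open>p i j \<noteq> 1/2\<close> is needed only for the finer asymptotics of the paper.\<close>
  interpret positive_chain p using assms(1,2) by unfold_locales
  show ?thesis
  proof (intro exI[of _ depth_const] exI[of _ 2] allI impI conjI)
    fix M :: "'a measure" and mu X n
    assume "prob_space M \<and> is_distribution mu \<and> markov_strings M mu p X n \<and> 2 \<le> n"
    then interpret markov_trie M p mu X n
      by (auto intro!: markov_trie.intro markov_trie_axioms.intro transition)
    define S where "S = (\<Sum>k. level mu p k (\<lambda>y b. share_prob n y))"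
    note series = share_series_bound[OF distribution two_le_n, folded S_def]
    show "integrable M (\<lambda>\<omega>. real (ext_path_length n (\<lambda>j. X j \<omega>)))"
      using expected_ext_path_length(1)[OF series(1)] .
    have "\<bar>real n * (1 + S) - real n * ln (real n) / H\<bar> = real n * \<bar>1 + S - ln (real n) / H\<bar>"
      by (simp add: abs_mult flip: right_diff_distrib times_divide_eq_right)
    also have "\<dots> \<le> depth_const * real n" using series(2) by (simp add: mult.commute mult_left_mono)
    finally show "\<bar>(\<integral>\<omega>. real (ext_path_length n (\<lambda>j. X j \<omega>)) \<partial>M) - real n * ln (real n) / H\<bar>
        \<le> depth_const * real n"
      using expected_ext_path_length(2)[OF series(1)] unfolding S_def by simp
  qed
qed

end
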